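(* Under the setting and assumptions described in the context, suppose that every subgradient returned by the oracle during the run of Algorithm MD is nonzero, and that the algorithm stops after $N$ iterations, where $N$ is the smallest positive integer with $$\sum_{i=0}^{N-1}\frac{1}{M_i^2}\ \ge\ \frac{2\Theta_0^2}{\varepsilon^2}.$$ Then the index set $I\subseteq\{0,\dots,N-1\}$ of "productive" steps is nonempty, so the output $\bar x^N=\big(\sum_{i\in I}h_i x^i\big)/\big(\sum_{i\in I}h_i\big)$ is well defined, and it satisfies $$f(\bar x^N)-f(x_* )\le\varepsilon,\qquad g(\bar x^N)\le\varepsilon .$$ Moreover, if $M>0$ is defined by $\frac{N}{M^2}=\sum_{i=0}^{N-1}\frac{1}{M_i^2}$ (an "averaged" subgradient norm replacing the global Lipschitz constant), then $N=\big\lceil 2M^2\Theta_0^2/\varepsilon^2\big\rceil$ in the sense that $N\ge 2M^2\Theta_0^2/\varepsilon^2$ with $N$ the first index at which the stopping criterion is met.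
   Context: Let $E$ be an $n$-dimensional real vector space with an arbitrary norm $\|\cdot\|$ and dual norm $\|\xi\|_*=\max\{\langle\xi,x\rangle:\|x\|\le1\}$ on $E^*$. Let $\mathcal X\subset E$ be a closed convex set, and let $f,g:\mathcal X\to\mathbb R$ be convex, subdifferentiable (at every point of $\mathcal X$ they have a subgradient with finite dual norm) and Lipschitz continuous. Consider the problem: minimize $f(x)$ over $x\in\mathcal X$ subject to $g(x)\le 0$, and let $x_*$ be a solution of it (so $g(x_* )\le0$ and $f(x_* )\le f(x)$ for all feasible $x$). A first-order oracle returns, for $x\in\mathcal X$, a subgradient $\nabla f(x)$ of $f$, a subgradient $\nabla g(x)$ of $g$, and the value $g(x)$. Let $d:\mathcal X\to\mathbb R$ (distance generating function) be continuously differentiable and 1-strongly convex w.r.t. $\|\cdot\|$, i.e. $\langle d'(x)-d'(y),x-y\rangle\ge\|x-y\|^2$ for all $x,y\in\mathcal X$, with a minimizer $x^0=\arg\min_{x\in\mathcal X}d(x)$. Let $\Theta_0>0$ satisfy $d(x_* )-d(x^0)\le\Theta_0^2$. The Bregman divergence is $V(x,y)=d(y)-d(x)-\langle d'(x),y-x\rangle$, and the proximal mapping is $\mathrm{Mirr}_x(y)=\arg\min_{u\in\mathcal X}\{\langle y,u\rangle+V(x,u)\}$ for $x\in\mathcal X$, $y\in E^*$. Algorithm MD (input $\varepsilon>0$, $\Theta_0^2$, $d$, $\mathcal X$): start at $x^0=\arg\min_{\mathcal X}d$, $I=\emptyset$. For $i=0,1,2,\dots$: if $g(x^i)\le\varepsilon$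 ("productive step"), set $M_i=\|\nabla f(x^i)\|_*$, $h_i=\varepsilon/M_i^2$, $x^{i+1}=\mathrm{Mirr}_{x^i}(h_i\nabla f(x^i))$ and add $i$ to $I$; otherwise ("non-productive step"), set $M_i=\|\nabla g(x^i)\|_*$, $h_i=\varepsilon/M_i^2$, $x^{i+1}=\mathrm{Mirr}_{x^i}(h_i\nabla g(x^i))$. Stop after iteration $N-1$, where $N$ is the first integer with $\sum_{i=0}^{N-1}M_i^{-2}\ge 2\Theta_0^2/\varepsilon^2$, and output $\bar x^N=\sum_{i\in I}h_ix^i/\sum_{i\in I}h_i$. *)

theory Defs
  imports "HOL-Analysis.Analysis"
begin

text \<open>The space E is modelled by a finite-dimensional type 'a::euclidean_space; the
  dual space E* is identified with E via the inner product, so a linear functional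
  xi acts as x |-> xi \<bullet> x.  The (arbitrary) norm of E is a separate function nrm.\<close>

definition is_norm :: "('a::real_vector \<Rightarrow> real) \<Rightarrow> bool" where
  "is_norm nrm \<longleftrightarrow>
     (\<forall>x. 0 \<le> nrm x) \<and> (\<forall>x. nrm x = 0 \<longleftrightarrow> x = 0) \<and>
     (\<forall>c x. nrm (c *\<^sub>R x) = \<bar>c\<bar> * nrm x) \<and>
     (\<forall>x y. nrm (x + y) \<le> nrm x + nrm y)"

definition dual_norm :: "('a::euclidean_space \<Rightarrow> real) \<Rightarrow> 'a \<Rightarrow> real" where
  "dual_norm nrm \<xi> = Sup {\<xi> \<bullet> x | x. nrm x \<le> 1}"

definition bregman :: "('a::euclidean_space \<Rightarrow> real) \<Rightarrow> ('a \<Rightarrow> 'a) \<Rightarrow> 'a \<Rightarrow> 'a \<Rightarrow> real" where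
  "bregman d d' x y = d y - d x - d' x \<bullet> (y - x)"

definition mirr :: "'a set \<Rightarrow> ('a::euclidean_space \<Rightarrow> real) \<Rightarrow> ('a \<Rightarrow> 'a) \<Rightarrow> 'a \<Rightarrow> 'a \<Rightarrow> 'a" where
  "mirr X d d' x y = (SOME u. u \<in> X \<and>
      (\<forall>v\<in>X. y \<bullet> u + bregman d d' x u \<le> y \<bullet> v + bregman d d' x v))"

definition md_dir :: "real \<Rightarrow> ('a \<Rightarrow> real) \<Rightarrow> ('a \<Rightarrow> 'a) \<Rightarrow> ('a \<Rightarrow> 'a) \<Rightarrow> 'a \<Rightarrow> 'a" where
  "md_dir eps g df dg x = (if g x \<le> eps then df x else dg x)"

primrec md_iter :: "real \<Rightarrow> 'a set \<Rightarrow> ('a::euclidean_space \<Rightarrow> real) \<Rightarrow> ('a \<Rightarrow> 'a)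
    \<Rightarrow> ('a \<Rightarrow> real) \<Rightarrow> ('a \<Rightarrow> real) \<Rightarrow> ('a \<Rightarrow> 'a) \<Rightarrow> ('a \<Rightarrow> 'a) \<Rightarrow> 'a \<Rightarrow> nat \<Rightarrow> 'a" where
  "md_iter eps X d d' nrm g df dg x0 0 = x0"
| "md_iter eps X d d' nrm g df dg x0 (Suc i) =
     (let x = md_iter eps X d d' nrm g df dg x0 i;
          s = md_dir eps g df dg x;
          h = eps / (dual_norm nrm s)\<^sup>2
      in mirr X d d' x (h *\<^sub>R s))"

end

theory Submission
  imports Defs
begin

text \<open>A prox step \<open>x\<^sup>+ = Mirr\<^sub>x(h s)\<close> satisfies
  \<open>h \<langle>s, x - v\<rangle> \<le> h\<^sup>2 \<parallel>s\<parallel>\<^sub>*\<^sup>2 / 2 + V(x, v) - V(x\<^sup>+, v)\<close> for every \<open>v \<in> X\<close>: this combines the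
  first-order optimality condition of the prox step, the three-point identity of the Bregman
  divergence and the strong convexity of \<open>d\<close>. Telescoping with \<open>v = x\<^sub>*\<close> and \<open>h\<^sub>i = \<epsilon>/M\<^sub>i\<^sup>2\<close> gives
  \<open>\<Sum> h\<^sub>i \<langle>s\<^sub>i, x\<^sub>i - x\<^sub>*\<rangle> \<le> \<epsilon>/2 \<Sum> h\<^sub>i + \<Theta>\<^sub>0\<^sup>2 \<le> \<epsilon> \<Sum> h\<^sub>i\<close>, the last step being the stopping rule.
  On a non-productive step \<open>\<langle>s\<^sub>i, x\<^sub>i - x\<^sub>*\<rangle> \<ge> g(x\<^sub>i) - g(x\<^sub>*) > \<epsilon>\<close>, so these steps exceed their
  share of the bound; hence productive steps exist, and on them the \<open>h\<close>-weighted mean of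
  \<open>f(x\<^sub>i) - f(x\<^sub>*) \<le> \<langle>s\<^sub>i, x\<^sub>i - x\<^sub>*\<rangle>\<close> is at most \<open>\<epsilon>\<close>. Jensen's inequality transfers the bounds on
  \<open>f\<close> and on \<open>g \<le> \<epsilon>\<close> to the weighted mean of the productive iterates.\<close>

lemma is_norm_nonneg: "is_norm nrm \<Longrightarrow> 0 \<le> nrm x"
  by (simp add: is_norm_def)

lemma is_norm_zero: "is_norm nrm \<Longrightarrow> nrm 0 = 0"
  by (simp add: is_norm_def)

lemma is_norm_pos: "is_norm nrm \<Longrightarrow> x \<noteq> 0 \<Longrightarrow> 0 < nrm x"
  unfolding is_norm_def by (metis less_eq_real_def)

lemma is_norm_scaleR: "is_norm nrm \<Longrightarrow> nrm (c *\<^sub>R x) = \<bar>c\<bar> * nrm x"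
  by (simp add: is_norm_def)

lemma is_norm_triangle: "is_norm nrm \<Longrightarrow> nrm (x + y) \<le> nrm x + nrm y"
  by (simp add: is_norm_def)

lemma is_norm_minus_commute: "is_norm nrm \<Longrightarrow> nrm (x - y) = nrm (y - x)"
  using is_norm_scaleR[of nrm "-1" "y - x"] by simp

lemma is_norm_sum:
  assumes "is_norm nrm" "finite S"
  shows "nrm (\<Sum>i\<in>S. v i) \<le> (\<Sum>i\<in>S. nrm (v i))"
  using assms(2)
proof (induction S rule: finite_induct)
  case empty
  then show ?case using is_norm_zero[OF assms(1)] by simp
next
  case (insert a F)
  then show ?case using is_norm_triangle[OF assms(1), of "v a" "sum v F"] by simp
qed

lemma is_norm_le_norm:
  fixes nrm :: "'a::euclidean_space \<Rightarrow> real"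
  assumes "is_norm nrm"
  obtains C where "C \<ge> 0" "\<And>x. nrm x \<le> C * norm x"
proof
  define C where "C = (\<Sum>b\<in>(Basis::'a set). nrm b)"
  show "C \<ge> 0"
    unfolding C_def by (intro sum_nonneg) (simp add: is_norm_nonneg[OF assms])
  fix x :: 'a
  have "nrm x = nrm (\<Sum>b\<in>Basis. (x \<bullet> b) *\<^sub>R b)"
    by (simp add: euclidean_representation)
  also have "\<dots> \<le> (\<Sum>b\<in>Basis. nrm ((x \<bullet> b) *\<^sub>R b))"
    by (rule is_norm_sum[OF assms finite_Basis])
  also have "\<dots> = (\<Sum>b\<in>Basis. \<bar>x \<bullet> b\<bar> * nrm b)"
    by (simp add: is_norm_scaleR[OF assms])
  also have "\<dots> \<le> (\<Sum>b\<in>Basis. norm x * nrm b)"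
    by (intro sum_mono mult_right_mono) (auto simp: Basis_le_norm is_norm_nonneg[OF assms])
  finally show "nrm x \<le> C * norm x"
    by (simp add: C_def sum_distrib_left mult.commute)
qed

text \<open>The lower bound is the minimum of the continuous function \<open>nrm\<close> on the Euclidean unit
  sphere; continuity comes from the upper bound.\<close>

lemma is_norm_ge_norm:
  fixes nrm :: "'a::euclidean_space \<Rightarrow> real"
  assumes "is_norm nrm"
  obtains c where "c > 0" "\<And>x. c * norm x \<le> nrm x"
proof -
  obtain C where C: "C \<ge> 0" "\<And>x. nrm x \<le> C * norm x"
    using is_norm_le_norm[OF assms] by blast
  have "C-lipschitz_on UNIV nrm"
  proof (rule lipschitz_onI)
    fix x y :: 'a
    have "nrm x \<le> nrm y + nrm (x - y)" "nrm y \<le> nrm x + nrm (x - y)"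
      using is_norm_triangle[OF assms, of y "x - y"] is_norm_triangle[OF assms, of x "y - x"]
        is_norm_minus_commute[OF assms, of x y] by simp_all
    moreover have "nrm (x - y) \<le> C * dist x y"
      using C(2)[of "x - y"] by (simp add: dist_norm)
    ultimately show "dist (nrm x) (nrm y) \<le> C * dist x y"
      by (simp add: dist_real_def abs_le_iff)
  qed (use C in auto)
  then have cont: "continuous_on (sphere 0 1) nrm"
    using lipschitz_on_continuous_on lipschitz_on_subset by blast
  obtain b :: 'a where "b \<in> Basis"
    using nonempty_Basis by blast
  then have "sphere (0::'a) 1 \<noteq> {}"
    by (auto intro!: exI[of _ b])
  then obtain z where z: "z \<in> sphere 0 1" "\<And>y. y \<in> sphere 0 1 \<Longrightarrow> nrm z \<le> nrm y"
    using continuous_attains_inf[OF compact_sphere _ cont] by blast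
  show ?thesis
  proof
    show "nrm z > 0"
      using z(1) by (intro is_norm_pos[OF assms]) auto
    fix x :: 'a
    show "nrm z * norm x \<le> nrm x"
    proof (cases "x = 0")
      case False
      have "nrm z \<le> nrm ((1 / norm x) *\<^sub>R x)"
        using False by (intro z(2)) simp
      then show ?thesis
        using False by (simp add: is_norm_scaleR[OF assms] field_simps)
    qed (simp add: is_norm_zero[OF assms])
  qed
qed

lemma dual_norm_upper:
  fixes nrm :: "'a::euclidean_space \<Rightarrow> real"
  assumes "is_norm nrm" "nrm x \<le> 1"
  shows "\<xi> \<bullet> x \<le> dual_norm nrm \<xi>"
proof -
  obtain c where c: "c > 0" "\<And>x. c * norm x \<le> nrm x"
    using is_norm_ge_norm[OF assms(1)] by blast
  have "bdd_above {\<xi> \<bullet> x | x. nrm x \<le> 1}"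
  proof (rule bdd_aboveI, clarify)
    fix x :: 'a
    assume "nrm x \<le> 1"
    then have "c * norm x \<le> 1"
      using c(2)[of x] by linarith
    then have "norm x \<le> 1 / c"
      using c(1) by (simp add: le_divide_eq mult.commute)
    then show "\<xi> \<bullet> x \<le> norm \<xi> * (1 / c)"
      using norm_cauchy_schwarz[of \<xi> x] mult_left_mono[of _ _ "norm \<xi>"] by force
  qed
  then show ?thesis
    unfolding dual_norm_def using assms(2) by (intro cSup_upper) blast+
qed

lemma inner_le_dual_norm:
  fixes nrm :: "'a::euclidean_space \<Rightarrow> real"
  assumes "is_norm nrm"
  shows "\<xi> \<bullet> x \<le> dual_norm nrm \<xi> * nrm x"
proof (cases "x = 0")
  case False
  then have "nrm x > 0"
    by (rule is_norm_pos[OF assms])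
  moreover have "\<xi> \<bullet> ((1 / nrm x) *\<^sub>R x) \<le> dual_norm nrm \<xi>"
    using \<open>nrm x > 0\<close> by (intro dual_norm_upper[OF assms]) (simp add: is_norm_scaleR[OF assms])
  ultimately show ?thesis
    by (simp add: field_simps)
qed (use dual_norm_upper[OF assms, of 0] is_norm_zero[OF assms] in simp)

lemma dual_norm_pos:
  fixes nrm :: "'a::euclidean_space \<Rightarrow> real"
  assumes "is_norm nrm" "\<xi> \<noteq> 0"
  shows "0 < dual_norm nrm \<xi>"
proof -
  have "nrm \<xi> > 0"
    by (rule is_norm_pos[OF assms])
  then have "\<xi> \<bullet> ((1 / nrm \<xi>) *\<^sub>R \<xi>) \<le> dual_norm nrm \<xi>"
    by (intro dual_norm_upper[OF assms(1)]) (simp add: is_norm_scaleR[OF assms(1)])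
  moreover have "\<xi> \<bullet> ((1 / nrm \<xi>) *\<^sub>R \<xi>) > 0"
    using \<open>nrm \<xi> > 0\<close> assms(2) by simp
  ultimately show ?thesis
    by linarith
qed

lemma convex_segment_param_mem:
  assumes "convex X" "x \<in> X" "y \<in> X" "t \<in> {0..1}"
  shows "x + t *\<^sub>R (y - x) \<in> X"
proof -
  have "x + t *\<^sub>R (y - x) = (1 - t) *\<^sub>R x + t *\<^sub>R y"
    by (simp add: algebra_simps)
  then show ?thesis
    using assms convexD_alt by fastforce
qed

lemma has_real_derivative_along_segment:
  fixes d :: "'a::euclidean_space \<Rightarrow> real"
  assumes "\<And>z. z \<in> X \<Longrightarrow> (d has_derivative (\<lambda>v. d' z \<bullet> v)) (at z within X)"
    and "convex X" "x \<in> X" "y \<in> X" "t \<in> {0..1}"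
  shows "((\<lambda>s. d (x + s *\<^sub>R (y - x))) has_real_derivative d' (x + t *\<^sub>R (y - x)) \<bullet> (y - x))
           (at t within {0..1})"
proof -
  define p where "p = (\<lambda>s::real. x + s *\<^sub>R (y - x))"
  have p_mem: "p ` {0..1} \<subseteq> X"
    using convex_segment_param_mem[OF assms(2-4)] by (auto simp: p_def)
  have "(p has_derivative (\<lambda>s. s *\<^sub>R (y - x))) (at t within {0..1})"
    unfolding p_def by (auto intro!: derivative_eq_intros)
  moreover have "(d has_derivative (\<lambda>v. d' (p t) \<bullet> v)) (at (p t) within p ` {0..1})"
    using assms(1) p_mem assms(5) by (blast intro: has_derivative_subset)
  ultimately have "(d \<circ> p has_derivative (\<lambda>v. d' (p t) \<bullet> v) \<circ> (\<lambda>s. s *\<^sub>R (y - x)))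
      (at t within {0..1})"
    by (rule diff_chain_within)
  moreover have "(\<lambda>v. d' (p t) \<bullet> v) \<circ> (\<lambda>s. s *\<^sub>R (y - x)) = (*) (d' (p t) \<bullet> (y - x))"
    by (auto simp: fun_eq_iff)
  ultimately show ?thesis
    unfolding has_field_derivative_def p_def by (simp add: comp_def)
qed

lemma has_real_derivative_at_left_min_nonneg:
  fixes \<phi> :: "real \<Rightarrow> real"
  assumes "(\<phi> has_real_derivative D) (at 0 within {0..1})"
    and "\<And>t. t \<in> {0..1} \<Longrightarrow> \<phi> 0 \<le> \<phi> t"
  shows "0 \<le> D"
proof -
  have lim: "((\<lambda>t. (\<phi> t - \<phi> 0) / (t - 0)) \<longlongrightarrow> D) (at_right 0)"
    using assms(1) unfolding has_field_derivative_iff by (simp add: at_within_Icc_at_right)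
  have "eventually (\<lambda>t. t \<in> {0<..<1}) (at_right (0::real))"
    by (rule eventually_at_right_real) simp
  then have "eventually (\<lambda>t. 0 \<le> (\<phi> t - \<phi> 0) / (t - 0)) (at_right 0)"
    by eventually_elim (use assms(2) in auto)
  then show ?thesis
    by (rule tendsto_lowerbound[OF lim]) simp
qed

lemma bregman_three_point:
  "(d' u - d' x) \<bullet> (v - u) = bregman d d' x v - bregman d d' u v - bregman d d' x u"
  unfolding bregman_def by (simp add: algebra_simps)

locale distance_generating =
  fixes X :: "'a::euclidean_space set" and nrm :: "'a \<Rightarrow> real"
    and d :: "'a \<Rightarrow> real" and d' :: "'a \<Rightarrow> 'a"
  assumes nrm: "is_norm nrm"
    and closed: "closed X" and convex: "convex X"
    and has_derivative_d: "\<And>x. x \<in> X \<Longrightarrow> (d has_derivative (\<lambda>v. d' x \<bullet> v)) (at x within X)"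
    and strongly_convex: "\<And>x y. x \<in> X \<Longrightarrow> y \<in> X \<Longrightarrow> (nrm (x - y))\<^sup>2 \<le> (d' x - d' y) \<bullet> (x - y)"
begin

lemma bregman_ge_half_sq:
  assumes x: "x \<in> X" and u: "u \<in> X"
  shows "(nrm (u - x))\<^sup>2 / 2 \<le> bregman d d' x u"
proof -
  define w where "w = u - x"
  define n where "n = nrm w"
  define p where "p = (\<lambda>s::real. x + s *\<^sub>R w)"
  define \<psi> where "\<psi> = (\<lambda>s. d (p s) - s * (d' x \<bullet> w) - s\<^sup>2 * n\<^sup>2 / 2)"
  have der: "(\<psi> has_real_derivative d' (p s) \<bullet> w - d' x \<bullet> w - s * n\<^sup>2) (at s within {0..1})"
    if "s \<in> {0..1}" for s
  proof -
    have "((\<lambda>s. d (p s)) has_real_derivative d' (p s) \<bullet> w) (at s within {0..1})"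
      using has_real_derivative_along_segment[OF has_derivative_d convex x u that]
      by (simp add: p_def w_def)
    then show ?thesis
      unfolding \<psi>_def by (auto intro!: derivative_eq_intros simp: power2_eq_square)
  qed
  \<comment> \<open>Strong convexity along the segment makes \<open>\<psi>\<close> nondecreasing; \<open>\<psi> 1 - \<psi> 0\<close> is the claim.\<close>
  have "\<psi> 0 \<le> \<psi> 1"
  proof (rule DERIV_nonneg_imp_increasing_open[of 0 1])
    show "continuous_on {0..1} \<psi>"
      using der by (intro DERIV_continuous_on) blast
    fix s :: real
    assume s: "0 < s" "s < 1"
    then have "(\<psi> has_real_derivative d' (p s) \<bullet> w - d' x \<bullet> w - s * n\<^sup>2) (at s)"
      using der[of s] at_within_interior[of s "{0..1}"] by simp
    moreover have "0 \<le> d' (p s) \<bullet> w - d' x \<bullet> w - s * n\<^sup>2"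
    proof -
      have "(nrm (s *\<^sub>R w))\<^sup>2 \<le> (d' (p s) - d' x) \<bullet> (s *\<^sub>R w)"
        using strongly_convex[of "p s" x] convex_segment_param_mem[OF convex x u, of s] x s
        by (simp add: p_def w_def)
      then have "s * (s * n\<^sup>2) \<le> s * ((d' (p s) - d' x) \<bullet> w)"
        using s by (simp add: is_norm_scaleR[OF nrm] n_def power2_eq_square algebra_simps)
      then have "s * n\<^sup>2 \<le> (d' (p s) - d' x) \<bullet> w"
        using s by simp
      then show ?thesis
        by (simp add: inner_diff_left)
    qed
    ultimately show "\<exists>y. (\<psi> has_real_derivative y) (at s) \<and> 0 \<le> y"
      by blast
  qed simp
  then show ?thesis
    unfolding \<psi>_def p_def bregman_def n_def w_def by simp
qed

lemma bregman_nonneg: "x \<in> X \<Longrightarrow> u \<in> X \<Longrightarrow> 0 \<le> bregman d d' x u"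
  by (rule order_trans[OF _ bregman_ge_half_sq]) simp_all

lemma bregman_at_minimizer_le:
  assumes "x0 \<in> X" "\<And>x. x \<in> X \<Longrightarrow> d x0 \<le> d x" "u \<in> X"
  shows "bregman d d' x0 u \<le> d u - d x0"
proof -
  have "((\<lambda>t. d (x0 + t *\<^sub>R (u - x0))) has_real_derivative d' x0 \<bullet> (u - x0)) (at 0 within {0..1})"
    using has_real_derivative_along_segment[OF has_derivative_d convex assms(1,3), of 0] by simp
  then have "0 \<le> d' x0 \<bullet> (u - x0)"
    using assms convex_segment_param_mem[OF convex assms(1,3)]
    by (elim has_real_derivative_at_left_min_nonneg) simp
  then show ?thesis
    by (simp add: bregman_def)
qed

lemma prox_objective_sublevel_bounded:
  assumes c: "c > 0" "\<And>z. c * norm z \<le> nrm z"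
    and x: "x \<in> X" and u: "u \<in> X"
    and le: "y \<bullet> u + bregman d d' x u \<le> y \<bullet> x"
  shows "c\<^sup>2 * norm (u - x) \<le> 2 * norm y"
proof -
  define n where "n = norm (u - x)"
  have "(c * n)\<^sup>2 \<le> (nrm (u - x))\<^sup>2"
    using c by (intro power_mono) (auto simp: n_def)
  moreover have "(nrm (u - x))\<^sup>2 / 2 \<le> y \<bullet> (x - u)"
    using le bregman_ge_half_sq[OF x u] unfolding inner_diff_right by linarith
  moreover have "y \<bullet> (x - u) \<le> norm y * n"
    using norm_cauchy_schwarz[of y "x - u"] by (simp add: n_def norm_minus_commute)
  ultimately have "n * (c\<^sup>2 * n) \<le> n * (2 * norm y)"
    by (simp add: power_mult_distrib power2_eq_square mult_ac)
  moreover have "n \<ge> 0"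
    by (simp add: n_def)
  ultimately show ?thesis
    unfolding n_def[symmetric] by (cases "n = 0") simp_all
qed

text \<open>The prox objective attains its minimum on \<open>X\<close> (its sublevel set through \<open>x\<close> is compact),
  so the choice operator in \<open>mirr\<close> picks a genuine minimizer.\<close>

lemma mirr_minimizes:
  assumes x: "x \<in> X"
  shows "mirr X d d' x y \<in> X"
    and "\<And>v. v \<in> X \<Longrightarrow> y \<bullet> mirr X d d' x y + bregman d d' x (mirr X d d' x y)
                           \<le> y \<bullet> v + bregman d d' x v"
proof -
  define F where "F = (\<lambda>u. y \<bullet> u + bregman d d' x u)"
  have "continuous_on X d"
    unfolding continuous_on_eq_continuous_within
    using has_derivative_d has_derivative_continuous by blast
  then have F_cont: "continuous_on X F"
    unfolding F_def bregman_def by (intro continuous_intros)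
  obtain c where c: "c > 0" "\<And>z. c * norm z \<le> nrm z"
    using is_norm_ge_norm[OF nrm] by blast
  define S where "S = X \<inter> F -` {..F x}"
  have "closed S"
    unfolding S_def by (rule continuous_closed_preimage[OF F_cont closed]) simp
  moreover have "S \<subseteq> cball x (2 * norm y / c\<^sup>2)"
  proof
    fix u
    assume "u \<in> S"
    then have "u \<in> X" "F u \<le> y \<bullet> x"
      by (simp_all add: S_def F_def bregman_def)
    then have "c\<^sup>2 * norm (u - x) \<le> 2 * norm y"
      by (intro prox_objective_sublevel_bounded[OF c x]) (simp_all add: F_def)
    then show "u \<in> cball x (2 * norm y / c\<^sup>2)"
      using c(1) by (simp add: dist_norm norm_minus_commute le_divide_eq mult.commute)
  qed
  ultimately have "compact S"
    using bounded_cball bounded_subset compact_eq_bounded_closed by blast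
  moreover have "x \<in> S"
    using x by (simp add: S_def)
  moreover have "continuous_on S F"
    by (rule continuous_on_subset[OF F_cont]) (simp add: S_def)
  ultimately obtain u where u: "u \<in> S" "\<And>v. v \<in> S \<Longrightarrow> F u \<le> F v"
    using continuous_attains_inf[of S F] by blast
  have "u \<in> X \<and> (\<forall>v\<in>X. F u \<le> F v)"
  proof (intro conjI ballI)
    show "u \<in> X"
      using u(1) by (simp add: S_def)
    fix v
    assume "v \<in> X"
    show "F u \<le> F v"
    proof (cases "v \<in> S")
      case False
      with \<open>v \<in> X\<close> have "F x < F v"
        by (simp add: S_def)
      moreover have "F u \<le> F x"
        using u(2) \<open>x \<in> S\<close> by blast
      ultimately show ?thesis
        by simp
    qed (rule u(2))
  qed
  then have "mirr X d d' x y \<in> X \<and> (\<forall>v\<in>X. F (mirr X d d' x y) \<le> F v)"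
    unfolding mirr_def F_def by (rule someI)
  then show "mirr X d d' x y \<in> X"
    and "\<And>v. v \<in> X \<Longrightarrow> y \<bullet> mirr X d d' x y + bregman d d' x (mirr X d d' x y)
                           \<le> y \<bullet> v + bregman d d' x v"
    unfolding F_def by blast+
qed

lemma mirr_variational_ineq:
  assumes x: "x \<in> X" and v: "v \<in> X"
  shows "0 \<le> (y + d' (mirr X d d' x y) - d' x) \<bullet> (v - mirr X d d' x y)"
proof -
  define u where "u = mirr X d d' x y"
  have u: "u \<in> X"
    unfolding u_def by (rule mirr_minimizes(1)[OF x])
  define \<phi> where "\<phi> = (\<lambda>t. y \<bullet> (u + t *\<^sub>R (v - u)) + bregman d d' x (u + t *\<^sub>R (v - u)))"
  have \<phi>_eq: "\<phi> = (\<lambda>t. y \<bullet> u + t * (y \<bullet> (v - u)) + d (u + t *\<^sub>R (v - u)) - d x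
                   - d' x \<bullet> (u - x) - t * (d' x \<bullet> (v - u)))"
    unfolding \<phi>_def bregman_def
    by (auto simp: fun_eq_iff algebra_simps)
  have d_line: "((\<lambda>t. d (u + t *\<^sub>R (v - u))) has_real_derivative d' u \<bullet> (v - u))
      (at 0 within {0..1})"
    using has_real_derivative_along_segment[OF has_derivative_d convex u v, of 0] by simp
  have "(\<phi> has_real_derivative y \<bullet> (v - u) + d' u \<bullet> (v - u) - d' x \<bullet> (v - u))
      (at 0 within {0..1})"
    unfolding \<phi>_eq by (rule derivative_eq_intros d_line | simp)+
  then have "(\<phi> has_real_derivative (y + d' u - d' x) \<bullet> (v - u)) (at 0 within {0..1})"
    by (simp add: inner_add_left inner_diff_left)
  moreover have "\<phi> 0 \<le> \<phi> t" if "t \<in> {0..1}" for t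
    using mirr_minimizes(2)[OF x convex_segment_param_mem[OF convex u v that]]
    by (simp add: \<phi>_def u_def)
  ultimately show ?thesis
    unfolding u_def by (rule has_real_derivative_at_left_min_nonneg)
qed

lemma mirr_step_ineq:
  assumes x: "x \<in> X" and v: "v \<in> X" and h: "h \<ge> 0"
  shows "h * (s \<bullet> (x - v)) \<le> h\<^sup>2 * (dual_norm nrm s)\<^sup>2 / 2 + bregman d d' x v
           - bregman d d' (mirr X d d' x (h *\<^sub>R s)) v"
proof -
  define u where "u = mirr X d d' x (h *\<^sub>R s)"
  define M where "M = dual_norm nrm s"
  define n where "n = nrm (x - u)"
  have u: "u \<in> X"
    unfolding u_def by (rule mirr_minimizes(1)[OF x])
  have "h * (s \<bullet> (u - v)) \<le> (d' u - d' x) \<bullet> (v - u)"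
    using mirr_variational_ineq[OF x v, of "h *\<^sub>R s"]
    by (simp add: u_def algebra_simps)
  moreover have "h * (s \<bullet> (x - u)) \<le> h * (M * n)"
    using inner_le_dual_norm[OF nrm, of s "x - u"] h by (simp add: M_def n_def mult_left_mono)
  moreover have "n\<^sup>2 / 2 \<le> bregman d d' x u"
    using bregman_ge_half_sq[OF x u] is_norm_minus_commute[OF nrm, of u x] by (simp add: n_def)
  moreover have "h * (M * n) - n\<^sup>2 / 2 \<le> h\<^sup>2 * M\<^sup>2 / 2"
    using zero_le_power2[of "h * M - n"] by (simp add: power2_eq_square algebra_simps)
  moreover have "h * (s \<bullet> (x - v)) = h * (s \<bullet> (x - u)) + h * (s \<bullet> (u - v))"
    by (simp add: algebra_simps)
  ultimately show ?thesis
    using bregman_three_point[of d' u x v d] unfolding u_def[symmetric] M_def[symmetric]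
    by linarith
qed

context
  fixes xs s :: "nat \<Rightarrow> 'a" and h :: "nat \<Rightarrow> real"
  assumes start: "xs 0 \<in> X"
    and step: "\<And>i. xs (Suc i) = mirr X d d' (xs i) (h i *\<^sub>R s i)"
begin

lemma mirror_descent_mem: "xs i \<in> X"
  by (induction i) (simp_all add: start step mirr_minimizes(1))

lemma mirror_descent_regret:
  assumes "\<And>i. h i \<ge> 0" "v \<in> X"
  shows "(\<Sum>i<n. h i * (s i \<bullet> (xs i - v)))
           \<le> (\<Sum>i<n. (h i)\<^sup>2 * (dual_norm nrm (s i))\<^sup>2 / 2) + bregman d d' (xs 0) v - bregman d d' (xs n) v"
proof (induction n)
  case (Suc n)
  then show ?case
    using mirr_step_ineq[OF mirror_descent_mem[of n] assms(2) assms(1)[of n], of "s n"] by (simp add: step)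
qed simp

lemma mirror_descent_adaptive_regret:
  assumes "v \<in> X" "bregman d d' (xs 0) v \<le> R" "eps > 0"
    and step_size: "\<And>i. h i = eps / (dual_norm nrm (s i))\<^sup>2"
    and stop: "2 * R / eps\<^sup>2 \<le> (\<Sum>i<N. 1 / (dual_norm nrm (s i))\<^sup>2)"
  shows "(\<Sum>i<N. h i * (s i \<bullet> (xs i - v))) \<le> eps * (\<Sum>i<N. h i)"
proof -
  have "h i \<ge> 0" for i
    using \<open>eps > 0\<close> by (simp add: step_size)
  then have "(\<Sum>i<N. h i * (s i \<bullet> (xs i - v)))
      \<le> (\<Sum>i<N. (h i)\<^sup>2 * (dual_norm nrm (s i))\<^sup>2 / 2) + bregman d d' (xs 0) v - bregman d d' (xs N) v"
    by (rule mirror_descent_regret[OF _ \<open>v \<in> X\<close>])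
  \<comment> \<open>Also when \<open>s i = 0\<close>, since then \<open>h i = eps / 0 = 0\<close>.\<close>
  moreover have "(h i)\<^sup>2 * (dual_norm nrm (s i))\<^sup>2 / 2 = eps / 2 * h i" for i
    by (cases "dual_norm nrm (s i) = 0") (simp_all add: step_size power2_eq_square field_simps)
  then have "(\<Sum>i<N. (h i)\<^sup>2 * (dual_norm nrm (s i))\<^sup>2 / 2) = eps / 2 * (\<Sum>i<N. h i)"
    by (simp add: sum_distrib_left)
  moreover have "0 \<le> bregman d d' (xs N) v"
    by (rule bregman_nonneg[OF mirror_descent_mem \<open>v \<in> X\<close>])
  moreover have "R \<le> eps / 2 * (\<Sum>i<N. h i)"
  proof -
    have "2 * R \<le> eps\<^sup>2 * (\<Sum>i<N. 1 / (dual_norm nrm (s i))\<^sup>2)"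
      using stop \<open>eps > 0\<close> by (simp add: pos_divide_le_eq mult.commute)
    moreover have "(\<Sum>i<N. h i) = eps * (\<Sum>i<N. 1 / (dual_norm nrm (s i))\<^sup>2)"
      by (simp add: step_size sum_distrib_left)
    ultimately show ?thesis
      by (simp add: power2_eq_square)
  qed
  ultimately show ?thesis
    using assms(2) by linarith
qed

end

end

lemma sum_productive_bound:
  fixes a h F :: "nat \<Rightarrow> real"
  assumes "I \<subseteq> {..<N}" "N > 0"
    and total: "(\<Sum>i<N. a i) \<le> eps * (\<Sum>i<N. h i)"
    and productive: "\<And>i. i \<in> I \<Longrightarrow> h i * F i \<le> a i"
    and non_productive: "\<And>i. i < N \<Longrightarrow> i \<notin> I \<Longrightarrow> eps * h i < a i"
  shows "I \<noteq> {}" and "(\<Sum>i\<in>I. h i * F i) \<le> eps * (\<Sum>i\<in>I. h i)"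
proof -
  define J where "J = {..<N} - I"
  have split: "(\<Sum>i<N. q i) = (\<Sum>i\<in>I. q i) + (\<Sum>i\<in>J. q i)" for q :: "nat \<Rightarrow> real"
    using sum.subset_diff[OF assms(1)] by (simp add: J_def add.commute)
  have "eps * (\<Sum>i\<in>J. h i) \<le> (\<Sum>i\<in>J. a i)"
    unfolding sum_distrib_left using non_productive by (intro sum_mono) (auto simp: J_def less_imp_le)
  moreover have "(\<Sum>i\<in>I. h i * F i) \<le> (\<Sum>i\<in>I. a i)"
    using productive by (rule sum_mono)
  ultimately show "(\<Sum>i\<in>I. h i * F i) \<le> eps * (\<Sum>i\<in>I. h i)"
    using total unfolding split[of a] split[of h] distrib_left by linarith
  show "I \<noteq> {}"
  proof
    assume "I = {}"
    then have "(\<Sum>i<N. eps * h i) < (\<Sum>i<N. a i)"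
      using assms(2) non_productive by (intro sum_strict_mono) auto
    with total show False
      by (simp add: sum_distrib_left)
  qed
qed

lemma convex_on_weighted_mean:
  fixes x :: "nat \<Rightarrow> 'a::real_vector"
  assumes "convex_on X f" "finite I" "I \<noteq> {}" "\<And>i. i \<in> I \<Longrightarrow> 0 < h i" "\<And>i. i \<in> I \<Longrightarrow> x i \<in> X"
  shows "f ((\<Sum>i\<in>I. h i *\<^sub>R x i) /\<^sub>R (\<Sum>i\<in>I. h i)) \<le> (\<Sum>i\<in>I. h i * f (x i)) / (\<Sum>i\<in>I. h i)"
proof -
  define H where "H = (\<Sum>i\<in>I. h i)"
  have "H > 0"
    unfolding H_def using assms(2-4) by (intro sum_pos)
  have "f (\<Sum>i\<in>I. (h i / H) *\<^sub>R x i) \<le> (\<Sum>i\<in>I. (h i / H) * f (x i))"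
  proof (rule convex_on_sum[OF assms(2,3,1)])
    show "(\<Sum>i\<in>I. h i / H) = 1"
      using \<open>H > 0\<close> by (simp add: H_def flip: sum_divide_distrib)
    show "0 \<le> h i / H" if "i \<in> I" for i
      using \<open>H > 0\<close> assms(4)[OF that] by simp
  qed (use assms(5) in blast)
  then show ?thesis
    by (simp add: H_def scaleR_sum_right sum_distrib_left divide_inverse_commute mult.assoc)
qed

lemma productive_mean_eps_solution:
  fixes xs :: "nat \<Rightarrow> 'a::real_inner" and h :: "nat \<Rightarrow> real"
  assumes "convex_on X f" "convex_on X g"
    and f_sub: "\<And>x y. x \<in> X \<Longrightarrow> y \<in> X \<Longrightarrow> f x + df x \<bullet> (y - x) \<le> f y"
    and g_sub: "\<And>x y. x \<in> X \<Longrightarrow> y \<in> X \<Longrightarrow> g x + dg x \<bullet> (y - x) \<le> g y"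
    and xstar: "xstar \<in> X" "g xstar \<le> 0"
    and xs: "\<And>i. xs i \<in> X"
    and "N > 0" and h_pos: "\<And>i. i < N \<Longrightarrow> 0 < h i"
    and regret: "(\<Sum>i<N. h i * (md_dir eps g df dg (xs i) \<bullet> (xs i - xstar))) \<le> eps * (\<Sum>i<N. h i)"
  defines "I \<equiv> {i. i < N \<and> g (xs i) \<le> eps}"
  defines "xbar \<equiv> (\<Sum>i\<in>I. h i *\<^sub>R xs i) /\<^sub>R (\<Sum>i\<in>I. h i)"
  shows "I \<noteq> {}" and "f xbar - f xstar \<le> eps" and "g xbar \<le> eps"
proof -
  let ?a = "\<lambda>i. h i * (md_dir eps g df dg (xs i) \<bullet> (xs i - xstar))"
  have productive: "h i * (f (xs i) - f xstar) \<le> ?a i" if "i \<in> I" for i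
  proof -
    have "f (xs i) - f xstar \<le> df (xs i) \<bullet> (xs i - xstar)"
      using f_sub[OF xs xstar(1), of i] by (simp add: inner_diff_right)
    then show ?thesis
      using that h_pos by (simp add: I_def md_dir_def mult_left_mono)
  qed
  have non_productive: "eps * h i < ?a i" if "i < N" "i \<notin> I" for i
  proof -
    have "g (xs i) - g xstar \<le> dg (xs i) \<bullet> (xs i - xstar)"
      using g_sub[OF xs xstar(1), of i] by (simp add: inner_diff_right)
    then have "eps < dg (xs i) \<bullet> (xs i - xstar)"
      using that xstar(2) by (simp add: I_def)
    then show ?thesis
      using that h_pos[OF that(1)] by (simp add: I_def md_dir_def)
  qed
  have "I \<subseteq> {..<N}"
    by (auto simp: I_def)
  note bound = sum_productive_bound[OF this \<open>N > 0\<close> regret productive non_productive]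
  show "I \<noteq> {}"
    by (rule bound(1))
  have "finite I" "\<And>i. i \<in> I \<Longrightarrow> 0 < h i"
    using h_pos by (auto simp: I_def)
  then have H_pos: "0 < (\<Sum>i\<in>I. h i)"
    using \<open>I \<noteq> {}\<close> by (intro sum_pos)
  note mean = convex_on_weighted_mean[OF _ \<open>finite I\<close> \<open>I \<noteq> {}\<close> \<open>\<And>i. i \<in> I \<Longrightarrow> 0 < h i\<close> xs]
  have "f xbar \<le> (\<Sum>i\<in>I. h i * f (xs i)) / (\<Sum>i\<in>I. h i)"
    unfolding xbar_def by (rule mean[OF \<open>convex_on X f\<close>])
  also have "\<dots> = (\<Sum>i\<in>I. h i * (f (xs i) - f xstar)) / (\<Sum>i\<in>I. h i) + f xstar"
    using H_pos by (simp add: field_simps sum_subtractf right_diff_distrib sum_distrib_left)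
  also have "\<dots> \<le> eps + f xstar"
    using bound(2) H_pos by (simp add: divide_le_eq mult.commute)
  finally show "f xbar - f xstar \<le> eps"
    by simp
  have "g xbar \<le> (\<Sum>i\<in>I. h i * g (xs i)) / (\<Sum>i\<in>I. h i)"
    unfolding xbar_def by (rule mean[OF \<open>convex_on X g\<close>])
  also have "\<dots> \<le> (\<Sum>i\<in>I. h i * eps) / (\<Sum>i\<in>I. h i)"
    using H_pos \<open>\<And>i. i \<in> I \<Longrightarrow> 0 < h i\<close>
    by (intro divide_right_mono sum_mono mult_left_mono) (auto simp: I_def intro!: less_imp_le)
  also have "\<dots> = eps"
    using H_pos by (simp add: sum_distrib_right[symmetric])
  finally show "g xbar \<le> eps" .
qed

theorem theorem1:
  fixes X :: "'a::euclidean_space set"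
    and nrm :: "'a \<Rightarrow> real"
    and f g d :: "'a \<Rightarrow> real"
    and df dg d' :: "'a \<Rightarrow> 'a"
    and x0 xstar :: 'a
    and eps \<Theta>0 :: real
    and N :: nat
  assumes norm: "is_norm nrm"
    and X: "closed X" "convex X"
    and fconv: "convex_on X f" and gconv: "convex_on X g"
    and fsub: "\<forall>x\<in>X. \<forall>y\<in>X. f y \<ge> f x + df x \<bullet> (y - x)"
    and gsub: "\<forall>x\<in>X. \<forall>y\<in>X. g y \<ge> g x + dg x \<bullet> (y - x)"
    and flip: "\<exists>L. \<forall>x\<in>X. \<forall>y\<in>X. \<bar>f x - f y\<bar> \<le> L * nrm (x - y)"
    and glip: "\<exists>L. \<forall>x\<in>X. \<forall>y\<in>X. \<bar>g x - g y\<bar> \<le> L * nrm (x - y)"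
    and xstar: "xstar \<in> X" "g xstar \<le> 0" "\<forall>x\<in>X. g x \<le> 0 \<longrightarrow> f xstar \<le> f x"
    and dderiv: "\<forall>x\<in>X. (d has_derivative (\<lambda>v. d' x \<bullet> v)) (at x within X)"
    and dcont: "continuous_on X d'"
    and dstrong: "\<forall>x\<in>X. \<forall>y\<in>X. (d' x - d' y) \<bullet> (x - y) \<ge> (nrm (x - y))\<^sup>2"
    and x0: "x0 \<in> X" "\<forall>x\<in>X. d x0 \<le> d x"
    and Theta: "\<Theta>0 > 0" "d xstar - d x0 \<le> \<Theta>0\<^sup>2"
    and eps: "eps > 0"
    and nonzero: "\<forall>i<N. md_dir eps g df dg (md_iter eps X d d' nrm g df dg x0 i) \<noteq> 0"
    and stop: "(\<Sum>i<N. 1 / (dual_norm nrm (md_dir eps g df dg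
                   (md_iter eps X d d' nrm g df dg x0 i)))\<^sup>2) \<ge> 2 * \<Theta>0\<^sup>2 / eps\<^sup>2"
    and first: "\<forall>k<N. (\<Sum>i<k. 1 / (dual_norm nrm (md_dir eps g df dg
                   (md_iter eps X d d' nrm g df dg x0 i)))\<^sup>2) < 2 * \<Theta>0\<^sup>2 / eps\<^sup>2"
  shows "let xs = md_iter eps X d d' nrm g df dg x0;
             Ms = (\<lambda>i. dual_norm nrm (md_dir eps g df dg (xs i)));
             h = (\<lambda>i. eps / (Ms i)\<^sup>2);
             I = {i. i < N \<and> g (xs i) \<le> eps};
             xbar = (\<Sum>i\<in>I. h i *\<^sub>R xs i) /\<^sub>R (\<Sum>i\<in>I. h i)
         in I \<noteq> {} \<and> f xbar - f xstar \<le> eps \<and> g xbar \<le> eps \<and>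
            (\<forall>M>0. real N / M\<^sup>2 = (\<Sum>i<N. 1 / (Ms i)\<^sup>2) \<longrightarrow>
                   real N \<ge> 2 * M\<^sup>2 * \<Theta>0\<^sup>2 / eps\<^sup>2)"
proof -
  interpret distance_generating X nrm d d'
    using norm X dderiv dstrong by unfold_locales auto
  define xs where "xs = md_iter eps X d d' nrm g df dg x0"
  define s where "s = (\<lambda>i. md_dir eps g df dg (xs i))"
  define h where "h = (\<lambda>i. eps / (dual_norm nrm (s i))\<^sup>2)"
  define S where "S = (\<Sum>i<N. 1 / (dual_norm nrm (s i))\<^sup>2)"
  have step: "xs (Suc i) = mirr X d d' (xs i) (h i *\<^sub>R s i)" for i
    by (simp add: xs_def s_def h_def Let_def)
  have xs_mem: "xs i \<in> X" for i
    using mirror_descent_mem[of xs h s] x0(1) step by (simp add: xs_def)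
  have stop': "2 * \<Theta>0\<^sup>2 / eps\<^sup>2 \<le> S"
    using stop by (simp add: S_def s_def xs_def)
  moreover have "0 < 2 * \<Theta>0\<^sup>2 / eps\<^sup>2"
    using Theta(1) eps by simp
  ultimately have "N > 0"
    by (intro gr0I) (simp add: S_def)
  have "bregman d d' (xs 0) xstar \<le> \<Theta>0\<^sup>2"
    using bregman_at_minimizer_le[OF x0(1) _ xstar(1)] x0(2) Theta(2) by (simp add: xs_def)
  then have regret: "(\<Sum>i<N. h i * (md_dir eps g df dg (xs i) \<bullet> (xs i - xstar))) \<le> eps * (\<Sum>i<N. h i)"
    using mirror_descent_adaptive_regret[of xs h s xstar] x0(1) step xstar(1) eps stop'
    by (simp add: xs_def h_def s_def S_def)
  have h_pos: "0 < h i" if "i < N" for i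
    using dual_norm_pos[OF norm, of "s i"] nonzero that eps by (simp add: h_def s_def xs_def)
  note solution = productive_mean_eps_solution[where xs = xs and h = h and N = N and eps = eps,
      OF fconv gconv _ _ xstar(1,2) xs_mem \<open>N > 0\<close> h_pos regret]
  have "2 * M\<^sup>2 * \<Theta>0\<^sup>2 / eps\<^sup>2 \<le> real N" if "M > 0" "real N / M\<^sup>2 = S" for M
    using mult_right_mono[OF stop', of "M\<^sup>2"] that by (simp add: field_simps)
  then show ?thesis
    using solution fsub gsub unfolding Let_def xs_def[symmetric] h_def s_def S_def by blast
qed

end
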